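(* Let $G$ be a torsion-free group and $\mathcal F\subset\mathcal P_G$ a left-invariant ideal. Then for every limit ordinal $\alpha$ (including $\alpha=0$) the family $\tau^{<\alpha}(\mathcal F)$ is additive. In particular, the thin-completion $\tau^*(\mathcal F)$ is a (left-invariant) ideal in $\mathcal P_G$.
   Context: $\mathcal P_G$ is the family of all subsets of $G$; $e$ is the neutral element. A family $\mathcal F\subset\mathcal P_G$ is left-invariant if $xF\in\mathcal F$ for all $F\in\mathcal F$, $x\in G$; lower if $A\subset B\in\mathcal F$ implies $A\in\mathcal F$; additive if $A\cup B\in\mathcal F$ for all $A,B\in\mathcal F$; an ideal if it is lower and additive. For a left-invariant lower family $\mathcal F$: $\tau(\mathcal F)=\{A\subset G: xA\cap yA\in\mathcal F$ for all distinct $x,y\in G\}$; $\tau^0(\mathcal F)=\mathcal F$, $\tau^{<\alpha}(\mathcal F)=\bigcup_{\beta<\alpha}\tau^\beta(\mathcal F)$ and $\tau^\alpha(\mathcal F)=\tau(\tau^{<\alpha}(\mathcal F))$ for $\alpha>0$. $\mathcal F$ is thin-complete if $\tau(\mathcal F)=\mathcal F$; the thin-completion $\tau^*(\mathcal F)$ is the smallest thin-complete family containing $\mathcal F$; it equals $\bigcup_{\alpha<|G|^+}\tau^\alpha(\mathcal F)$. A group is torsion-free if every non-neutral element has infinite order. *)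

theory Defs
  imports "HOL-Algebra.Coset"
begin

definition torsion_free :: "('a, 'b) monoid_scheme \<Rightarrow> bool" where
  "torsion_free G \<longleftrightarrow>
     (\<forall>g\<in>carrier G. g \<noteq> \<one>\<^bsub>G\<^esub> \<longrightarrow> (\<forall>n::nat. n > 0 \<longrightarrow> g [^]\<^bsub>G\<^esub> n \<noteq> \<one>\<^bsub>G\<^esub>))"

definition left_invariant :: "('a, 'b) monoid_scheme \<Rightarrow> 'a set set \<Rightarrow> bool" where
  "left_invariant G \<F> \<longleftrightarrow> (\<forall>F\<in>\<F>. \<forall>x\<in>carrier G. x <#\<^bsub>G\<^esub> F \<in> \<F>)"

definition lower_family :: "'a set set \<Rightarrow> bool" where
  "lower_family \<F> \<longleftrightarrow> (\<forall>A B. A \<subseteq> B \<and> B \<in> \<F> \<longrightarrow> A \<in> \<F>)"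

definition additive_family :: "'a set set \<Rightarrow> bool" where
  "additive_family \<F> \<longleftrightarrow> (\<forall>A\<in>\<F>. \<forall>B\<in>\<F>. A \<union> B \<in> \<F>)"

definition ideal_family :: "'a set set \<Rightarrow> bool" where
  "ideal_family \<F> \<longleftrightarrow> lower_family \<F> \<and> additive_family \<F>"

definition tau :: "('a, 'b) monoid_scheme \<Rightarrow> 'a set set \<Rightarrow> 'a set set" where
  "tau G \<F> = {A. A \<subseteq> carrier G \<and>
     (\<forall>x\<in>carrier G. \<forall>y\<in>carrier G. x \<noteq> y \<longrightarrow> (x <#\<^bsub>G\<^esub> A) \<inter> (y <#\<^bsub>G\<^esub> A) \<in> \<F>)}"

text \<open>Transfinite iteration, indexed by an arbitrary well-ordered type standing for
  (an initial segment of) the ordinals: T 0 = F and T alpha = tau (\<Union>beta<alpha. T beta)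
  for alpha > 0.  Such a T exists and is unique by well-founded recursion.\<close>
definition tau_hierarchy ::
  "('a, 'b) monoid_scheme \<Rightarrow> 'a set set \<Rightarrow> ('o::wellorder \<Rightarrow> 'a set set) \<Rightarrow> bool" where
  "tau_hierarchy G \<F> T \<longleftrightarrow>
     (\<forall>\<alpha>. T \<alpha> = (if (\<forall>\<beta>. \<alpha> \<le> \<beta>) then \<F> else tau G (\<Union>\<beta>\<in>{..<\<alpha>}. T \<beta>)))"

definition tau_below :: "('o::wellorder \<Rightarrow> 'a set set) \<Rightarrow> 'o \<Rightarrow> 'a set set" where
  "tau_below T \<alpha> = (\<Union>\<beta>\<in>{..<\<alpha>}. T \<beta>)"

text \<open>Limit ordinal (including 0): not a successor.\<close>
definition limit_elem :: "'o::wellorder \<Rightarrow> bool" where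
  "limit_elem \<alpha> \<longleftrightarrow> (\<forall>\<beta><\<alpha>. \<exists>\<gamma>. \<beta> < \<gamma> \<and> \<gamma> < \<alpha>)"

definition thin_complete :: "('a, 'b) monoid_scheme \<Rightarrow> 'a set set \<Rightarrow> bool" where
  "thin_complete G \<F> \<longleftrightarrow> tau G \<F> = \<F>"

definition tau_star :: "('a, 'b) monoid_scheme \<Rightarrow> 'a set set \<Rightarrow> 'a set set" where
  "tau_star G \<F> = \<Inter>{\<H>. \<F> \<subseteq> \<H> \<and> \<H> \<subseteq> Pow (carrier G) \<and> left_invariant G \<H> \<and>
                          lower_family \<H> \<and> thin_complete G \<H>}"

end

theory Submission
  imports Defs
begin

(* The heart of the argument is a counting estimate.  Write fin_cover K N for the
   sets covered by at most N members of K.  If X is covered by m members of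
   tau(K), then any m+1 left translates of X intersect inside a union of at most
   m(m+1)^2 members of K (pigeonhole).  In a torsion-free group the union of two
   distinct translates of a finite set S is strictly larger than S; hence taking
   pairwise translate-intersections m times, starting from X itself, shows
   fin_cover (tau K) m \<subseteq> tau^m (fin_cover K (m(m+1)^2))   (fin_cover_tau).

   Consequently finite unions of members of a level of the hierarchy reappear
   finitely many levels higher; by well-founded induction on the levels, every
   union tau^{<alpha}(F) with alpha a limit is additive.  For the thin-completion
   we run the same estimate along the natural-number iterates of tau and apply
   Zorn's lemma: a maximal additive left-invariant lower subfamily M of
   tau*(F) containing F absorbs the union of its tau-iterates, so M is
   thin-complete and hence equals tau*(F). *)

definition invariant_lower :: "('a, 'b) monoid_scheme \<Rightarrow> 'a set set \<Rightarrow> bool" where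
  "invariant_lower G K \<longleftrightarrow> K \<subseteq> Pow (carrier G) \<and> lower_family K \<and> left_invariant G K"

lemma tau_mono: "K \<subseteq> K' \<Longrightarrow> tau G K \<subseteq> tau G K'"
  unfolding tau_def by blast

lemma l_coset_mono: "A \<subseteq> B \<Longrightarrow> x <#\<^bsub>G\<^esub> A \<subseteq> x <#\<^bsub>G\<^esub> B"
  unfolding l_coset_def by blast

text \<open>tau preserves lowerness, because translates of a subset are subsets of translates.\<close>
lemma tau_lower: "lower_family K \<Longrightarrow> lower_family (tau G K)"
  unfolding lower_family_def
proof (intro allI impI, elim conjE)
  fix A B assume lower: "\<forall>A B. A \<subseteq> B \<and> B \<in> K \<longrightarrow> A \<in> K"
    and AB: "A \<subseteq> B" and B: "B \<in> tau G K"
  have "A \<subseteq> carrier G" using AB B unfolding tau_def by blast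
  moreover have "(x <#\<^bsub>G\<^esub> A) \<inter> (y <#\<^bsub>G\<^esub> A) \<in> K"
    if "x \<in> carrier G" "y \<in> carrier G" "x \<noteq> y" for x y
  proof -
    have "(x <#\<^bsub>G\<^esub> B) \<inter> (y <#\<^bsub>G\<^esub> B) \<in> K" using B that unfolding tau_def by blast
    moreover have "(x <#\<^bsub>G\<^esub> A) \<inter> (y <#\<^bsub>G\<^esub> A) \<subseteq> (x <#\<^bsub>G\<^esub> B) \<inter> (y <#\<^bsub>G\<^esub> B)"
      using l_coset_mono[OF AB] by blast
    ultimately show ?thesis using lower by blast
  qed
  ultimately show "A \<in> tau G K" unfolding tau_def by blast
qed

text \<open>tau preserves left invariance: translating A by g just reindexes the pairs (x, y).\<close>
lemma (in group) tau_left_invariant: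
  assumes "left_invariant G K" shows "left_invariant G (tau G K)"
  unfolding left_invariant_def
proof (intro ballI)
  fix A g assume A: "A \<in> tau G K" and g: "g \<in> carrier G"
  have As: "A \<subseteq> carrier G" using A unfolding tau_def by blast
  show "g <# A \<in> tau G K" unfolding tau_def
  proof (intro CollectI conjI ballI impI)
    show "g <# A \<subseteq> carrier G" using l_coset_subset_G[OF As g] .
    fix x y assume x: "x \<in> carrier G" and y: "y \<in> carrier G" and "x \<noteq> y"
    then have "x \<otimes> g \<noteq> y \<otimes> g" using right_cancel[OF g x y] by blast
    then have "((x \<otimes> g) <# A) \<inter> ((y \<otimes> g) <# A) \<in> K"
      using A x y g unfolding tau_def by blast
    then show "(x <# (g <# A)) \<inter> (y <# (g <# A)) \<in> K"
      using lcos_m_assoc[OF As x g] lcos_m_assoc[OF As y g] by simp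
  qed
qed

lemma (in group) invariant_lower_tau:
  assumes "invariant_lower G K" shows "invariant_lower G (tau G K)"
proof -
  have "tau G K \<subseteq> Pow (carrier G)" unfolding tau_def by blast
  then show ?thesis
    using assms tau_lower tau_left_invariant unfolding invariant_lower_def by blast
qed

text \<open>A left-invariant lower family is contained in its tau-image: x A \<inter> y A \<subseteq> x A.\<close>
lemma invariant_lower_subset_tau: "invariant_lower G K \<Longrightarrow> K \<subseteq> tau G K"
proof
  fix A assume K: "invariant_lower G K" and A: "A \<in> K"
  have "x <#\<^bsub>G\<^esub> A \<in> K" if "x \<in> carrier G" for x
    using K A that unfolding invariant_lower_def left_invariant_def by blast
  moreover have "A \<subseteq> carrier G" using K A unfolding invariant_lower_def by blast
  ultimately show "A \<in> tau G K"
    using K unfolding tau_def invariant_lower_def lower_family_def by blast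
qed

lemma invariant_lower_Union:
  "(\<And>K. K \<in> \<K> \<Longrightarrow> invariant_lower G K) \<Longrightarrow> invariant_lower G (\<Union>\<K>)"
  unfolding invariant_lower_def lower_family_def left_invariant_def by blast

lemma invariant_lower_Inter:
  "\<C> \<noteq> {} \<Longrightarrow> (\<And>H. H \<in> \<C> \<Longrightarrow> invariant_lower G H) \<Longrightarrow> invariant_lower G (\<Inter>\<C>)"
  unfolding invariant_lower_def lower_family_def left_invariant_def by blast

lemma (in group) invariant_lower_funpow:
  "invariant_lower G K \<Longrightarrow> invariant_lower G ((tau G ^^ n) K)"
  by (induction n) (simp_all add: invariant_lower_tau)

lemma funpow_tau_mono: "K \<subseteq> K' \<Longrightarrow> (tau G ^^ n) K \<subseteq> (tau G ^^ n) K'"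
  by (induction n) (simp_all add: tau_mono)

lemma (in group) funpow_tau_increasing:
  assumes "invariant_lower G K" "n \<le> n'"
  shows "(tau G ^^ n) K \<subseteq> (tau G ^^ n') K"
  using invariant_lower_subset_tau[OF invariant_lower_funpow[OF assms(1)]]
  by (intro lift_Suc_mono_le[of "\<lambda>n. (tau G ^^ n) K", OF _ assms(2)]) simp

section \<open>Finite covers\<close>

definition fin_cover :: "'a set set \<Rightarrow> nat \<Rightarrow> 'a set set" where
  "fin_cover K N = {X. \<exists>\<X>. finite \<X> \<and> \<X> \<noteq> {} \<and> card \<X> \<le> N \<and> \<X> \<subseteq> K \<and> X \<subseteq> \<Union>\<X>}"

lemma fin_cover_lower: "lower_family (fin_cover K N)"
  unfolding lower_family_def fin_cover_def by blast

lemma fin_cover_ideal: assumes "ideal_family K" shows "fin_cover K N \<subseteq> K"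
proof
  fix X assume "X \<in> fin_cover K N"
  then obtain \<X> where X: "finite \<X>" "\<X> \<noteq> {}" "\<X> \<subseteq> K" "X \<subseteq> \<Union>\<X>"
    unfolding fin_cover_def by blast
  have "\<Union>\<X> \<in> K" using X(1-3)
    by (induction \<X> rule: finite_ne_induct)
       (use assms in \<open>auto simp: ideal_family_def additive_family_def\<close>)
  then show "X \<in> K"
    using X(4) assms unfolding ideal_family_def lower_family_def by blast
qed

lemma Un_in_fin_cover: "A \<in> K \<Longrightarrow> B \<in> K \<Longrightarrow> A \<union> B \<in> fin_cover K 2"
  unfolding fin_cover_def by (intro CollectI exI[of _ "{A, B}"]) (simp add: card_insert_if)

lemma additive_chain_Union:
  fixes T :: "'i::linorder \<Rightarrow> 'a set set"
  assumes mono: "\<And>x y. x \<in> I \<Longrightarrow> y \<in> I \<Longrightarrow> x \<le> y \<Longrightarrow> T x \<subseteq> T y"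
    and absorb: "\<And>b. b \<in> I \<Longrightarrow> \<exists>c\<in>I. fin_cover (T b) 2 \<subseteq> T c"
  shows "additive_family (\<Union>b\<in>I. T b)"
  unfolding additive_family_def
proof (intro ballI)
  fix A B assume "A \<in> (\<Union>b\<in>I. T b)" "B \<in> (\<Union>b\<in>I. T b)"
  then obtain x y where xy: "x \<in> I" "y \<in> I" "A \<in> T x" "B \<in> T y" by blast
  define z where "z = max x y"
  have z: "z \<in> I" "x \<le> z" "y \<le> z" using xy(1,2) unfolding z_def max_def by auto
  have "A \<union> B \<in> fin_cover (T z) 2"
    using xy mono[OF _ z(1)] z by (intro Un_in_fin_cover) blast+
  then show "A \<union> B \<in> (\<Union>b\<in>I. T b)" using absorb[OF z(1)] by blast
qed

section \<open>Translates in a torsion-free group\<close>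

lemma translates_pigeonhole:
  assumes cover: "X \<subseteq> \<Union>\<X>" and fin: "finite \<X>" and card: "card \<X> < card S"
  shows "(\<Inter>g\<in>S. g <#\<^bsub>G\<^esub> X)
           \<subseteq> \<Union> ((\<lambda>(A, g, h). (g <#\<^bsub>G\<^esub> A) \<inter> (h <#\<^bsub>G\<^esub> A)) ` (\<X> \<times> {(g, h) \<in> S \<times> S. g \<noteq> h}))"
proof
  fix x assume x: "x \<in> (\<Inter>g\<in>S. g <#\<^bsub>G\<^esub> X)"
  have "\<forall>g\<in>S. \<exists>A\<in>\<X>. x \<in> g <#\<^bsub>G\<^esub> A"
    using x cover unfolding l_coset_def by blast
  then obtain f where f: "\<And>g. g \<in> S \<Longrightarrow> f g \<in> \<X> \<and> x \<in> g <#\<^bsub>G\<^esub> f g" by metis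
  have "\<not> inj_on f S"
    using card_inj_on_le[of f S \<X>] f fin card by fastforce
  then obtain g h where gh: "g \<in> S" "h \<in> S" "g \<noteq> h" "f g = f h"
    unfolding inj_on_def by blast
  then have "x \<in> (g <#\<^bsub>G\<^esub> f g) \<inter> (h <#\<^bsub>G\<^esub> f g)" using f[OF gh(1)] f[OF gh(2)] by simp
  moreover have "(f g, g, h) \<in> \<X> \<times> {(g, h) \<in> S \<times> S. g \<noteq> h}" using f gh by blast
  ultimately show "x \<in> \<Union> ((\<lambda>(A, g, h). (g <#\<^bsub>G\<^esub> A) \<inter> (h <#\<^bsub>G\<^esub> A)) ` (\<X> \<times> {(g, h) \<in> S \<times> S. g \<noteq> h}))"
    by force
qed

context group
begin

lemma l_coset_image: "x <# A = (\<lambda>a. x \<otimes> a) ` A"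
  unfolding l_coset_def by blast

lemma l_coset_INT:
  assumes u: "u \<in> carrier G" and S: "S \<noteq> {}" "S \<subseteq> carrier G" and D: "D \<subseteq> carrier G"
  shows "u <# (\<Inter>g\<in>S. g <# D) = (\<Inter>g\<in>(\<lambda>g. u \<otimes> g) ` S. g <# D)"
proof -
  obtain s where "s \<in> S" using S(1) by blast
  have "u <# (\<Inter>g\<in>S. g <# D) = (\<lambda>a. u \<otimes> a) ` (\<Inter>g\<in>S. g <# D)"
    by (rule l_coset_image)
  also have "\<dots> = (\<Inter>g\<in>S. (\<lambda>a. u \<otimes> a) ` (g <# D))"
    using inj_on_cmult[OF u] S(2) l_coset_subset_G[OF D] \<open>s \<in> S\<close>
    by (intro image_INT[where C = "carrier G"]) blast+
  also have "\<dots> = (\<Inter>g\<in>S. (u \<otimes> g) <# D)"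
    using S(2) by (intro INF_cong refl) (simp add: l_coset_image[symmetric] lcos_m_assoc[OF D u] subset_iff)
  also have "\<dots> = (\<Inter>g\<in>(\<lambda>g. u \<otimes> g) ` S. g <# D)"
    by (simp add: image_image)
  finally show ?thesis .
qed

text \<open>In a torsion-free group no non-trivial left translation fixes a finite
  non-empty set: otherwise all w^n s would lie in the finite set S.\<close>
lemma translation_moves_finite_set:
  assumes tf: "torsion_free G" and w: "w \<in> carrier G" "w \<noteq> \<one>"
    and S: "finite S" "S \<noteq> {}" "S \<subseteq> carrier G"
  shows "(\<lambda>g. w \<otimes> g) ` S \<noteq> S"
proof
  assume fix_S: "(\<lambda>g. w \<otimes> g) ` S = S"
  obtain s where s: "s \<in> S" using S by blast
  have sc: "s \<in> carrier G" using s S by blast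
  have orbit: "w [^] n \<otimes> s \<in> S" for n :: nat
  proof (induction n)
    case 0 then show ?case using s sc by simp
  next
    case (Suc n)
    have "w [^] Suc n \<otimes> s = w \<otimes> (w [^] n \<otimes> s)"
      using w sc by (metis m_assoc nat_pow_Suc2 nat_pow_closed)
    then show ?case using Suc fix_S by blast
  qed
  have "finite (range (\<lambda>n::nat. w [^] n \<otimes> s))"
    by (rule finite_subset[OF _ S(1)]) (use orbit in blast)
  then have "\<not> inj (\<lambda>n::nat. w [^] n \<otimes> s)"
    using finite_imageD infinite_UNIV_nat by blast
  then obtain n m :: nat where "n \<noteq> m" "w [^] n \<otimes> s = w [^] m \<otimes> s"
    unfolding inj_def by blast
  moreover have "w [^] n = w [^] m" using calculation(2) w sc by simp
  ultimately have "w [^] (n - m) = \<one>" "w [^] (m - n) = \<one>" "0 < n - m \<or> 0 < m - n"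
    using pow_eq_div2[OF w(1)] by auto
  then show False using tf w unfolding torsion_free_def by blast
qed

lemma card_translates_Un:
  assumes tf: "torsion_free G" and uv: "u \<in> carrier G" "v \<in> carrier G" "u \<noteq> v"
    and S: "finite S" "S \<noteq> {}" "S \<subseteq> carrier G"
  shows "card S < card ((\<lambda>g. u \<otimes> g) ` S \<union> (\<lambda>g. v \<otimes> g) ` S)"
proof -
  let ?uS = "(\<lambda>g. u \<otimes> g) ` S" and ?vS = "(\<lambda>g. v \<otimes> g) ` S"
  have card_uS: "card ?uS = card S" and card_vS: "card ?vS = card S"
    using uv S(3) inj_on_cmult by (auto intro!: card_image intro: inj_on_subset)
  have "?uS \<noteq> ?vS"
  proof
    assume eq: "?uS = ?vS"
    define w where "w = inv u \<otimes> v"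
    have "u \<otimes> w = v" using uv unfolding w_def by (simp add: m_assoc[symmetric])
    then have w: "w \<in> carrier G" "w \<noteq> \<one>" using uv unfolding w_def by auto
    have "(\<lambda>g. w \<otimes> g) ` S = (\<lambda>g. inv u \<otimes> g) ` ?vS"
      unfolding image_image w_def using uv S(3) by (intro image_cong) (auto simp: m_assoc)
    also have "\<dots> = (\<lambda>g. inv u \<otimes> g) ` ?uS" using eq by simp
    also have "\<dots> = (\<lambda>g. g) ` S"
      unfolding image_image using uv S(3) by (intro image_cong) (auto simp: m_assoc[symmetric])
    also have "\<dots> = S" by simp
    finally show False using translation_moves_finite_set[OF tf w S] by simp
  qed
  then have "\<not> ?vS \<subseteq> ?uS"
    using card_subset_eq[of ?uS ?vS] S(1) card_uS card_vS by auto
  then have "card ?uS < card (?uS \<union> ?vS)"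
    using S(1) by (intro psubset_card_mono) auto
  then show ?thesis using card_uS by simp
qed

text \<open>If every intersection of t translates of D lies in the lower family L, then every
  intersection of at least t - j translates lies in tau^j(L): the pairwise
  intersection x(\<Inter>S) \<inter> y(\<Inter>S) of an intersection of translates over S is the
  intersection over the strictly larger set xS \<union> yS.\<close>
lemma translates_in_tau_power:
  assumes tf: "torsion_free G" and D: "D \<subseteq> carrier G" and L: "lower_family L"
    and base: "\<And>S. finite S \<Longrightarrow> S \<subseteq> carrier G \<Longrightarrow> card S = t \<Longrightarrow> (\<Inter>g\<in>S. g <# D) \<in> L"
  shows "finite S \<Longrightarrow> S \<noteq> {} \<Longrightarrow> S \<subseteq> carrier G \<Longrightarrow> t \<le> card S + j
           \<Longrightarrow> (\<Inter>g\<in>S. g <# D) \<in> (tau G ^^ j) L"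
proof (induction j arbitrary: S)
  case 0
  then obtain S' where S': "S' \<subseteq> S" "card S' = t" "finite S'"
    using obtain_subset_with_card_n[of t S] by auto
  then have "(\<Inter>g\<in>S'. g <# D) \<in> L" using base 0 by blast
  moreover have "(\<Inter>g\<in>S. g <# D) \<subseteq> (\<Inter>g\<in>S'. g <# D)" using S'(1) by blast
  ultimately show ?case using L unfolding lower_family_def by (simp only: funpow_0)
next
  case (Suc j)
  have "(x <# (\<Inter>g\<in>S. g <# D)) \<inter> (y <# (\<Inter>g\<in>S. g <# D)) \<in> (tau G ^^ j) L"
    if x: "x \<in> carrier G" and y: "y \<in> carrier G" and "x \<noteq> y" for x y
  proof -
    define S' where "S' = (\<lambda>g. x \<otimes> g) ` S \<union> (\<lambda>g. y \<otimes> g) ` S"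
    have "card S < card S'"
      unfolding S'_def using card_translates_Un[OF tf x y \<open>x \<noteq> y\<close> Suc.prems(1-3)] .
    moreover have "finite S'" "S' \<noteq> {}" "S' \<subseteq> carrier G"
      unfolding S'_def using Suc.prems x y by auto
    ultimately have "(\<Inter>g\<in>S'. g <# D) \<in> (tau G ^^ j) L"
      using Suc.IH Suc.prems(4) by simp
    then show ?thesis
      unfolding S'_def INT_Un l_coset_INT[OF x Suc.prems(2,3) D] l_coset_INT[OF y Suc.prems(2,3) D] .
  qed
  moreover have "(\<Inter>g\<in>S. g <# D) \<subseteq> carrier G"
    using Suc.prems(2,3) l_coset_subset_G[OF D] by blast
  ultimately show ?case unfolding tau_def by simp
qed

lemma translates_in_fin_cover:
  assumes X: "finite \<X>" "\<X> \<noteq> {}" "card \<X> \<le> m" "\<X> \<subseteq> tau G K" "X \<subseteq> \<Union>\<X>"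
    and S: "finite S" "S \<subseteq> carrier G" "card S = m + 1"
  shows "(\<Inter>g\<in>S. g <# X) \<in> fin_cover K (m * (m + 1)^2)"
proof -
  define P where "P = {(g, h) \<in> S \<times> S. g \<noteq> h}"
  define \<Y> where "\<Y> = (\<lambda>(A, g, h). (g <# A) \<inter> (h <# A)) ` (\<X> \<times> P)"
  have finP: "finite P" unfolding P_def using S(1) by (auto intro: finite_subset[of _ "S \<times> S"])
  have "card \<Y> \<le> card \<X> * card P"
    unfolding \<Y>_def card_cartesian_product[symmetric] by (rule card_image_le) (use X(1) finP in simp)
  also have "\<dots> \<le> m * card (S \<times> S)"
    using X(3) S(1) by (intro mult_mono card_mono) (auto simp: P_def)
  also have "\<dots> = m * (m + 1)^2" using S(3) by (simp add: card_cartesian_product power2_eq_square)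
  finally have card_\<Y>: "card \<Y> \<le> m * (m + 1)^2" .
  have "\<Y> \<subseteq> K"
  proof
    fix Y assume "Y \<in> \<Y>"
    then obtain A g h where "A \<in> \<X>" "g \<in> S" "h \<in> S" "g \<noteq> h" "Y = (g <# A) \<inter> (h <# A)"
      unfolding \<Y>_def P_def by auto
    then show "Y \<in> K" using X(4) S(2) unfolding tau_def by blast
  qed
  moreover have "\<Y> \<noteq> {}"
  proof -
    have "\<not> card S \<le> Suc 0" using S(3) X(1-3) card_gt_0_iff[of \<X>] by simp
    then obtain g h where "g \<in> S" "h \<in> S" "g \<noteq> h"
      using card_le_Suc0_iff_eq[OF S(1)] by blast
    then show ?thesis using X(2) unfolding \<Y>_def P_def by blast
  qed
  moreover have "(\<Inter>g\<in>S. g <# X) \<subseteq> \<Union>\<Y>"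
    unfolding \<Y>_def P_def by (rule translates_pigeonhole[OF X(5,1)]) (use X(3) S(3) in simp)
  moreover have "finite \<Y>" unfolding \<Y>_def using X(1) finP by simp
  ultimately show ?thesis
    unfolding fin_cover_def using card_\<Y> by blast
qed

lemma fin_cover_tau:
  assumes tf: "torsion_free G"
  shows "fin_cover (tau G K) m \<subseteq> (tau G ^^ m) (fin_cover K (m * (m + 1)^2))"
proof
  fix X assume "X \<in> fin_cover (tau G K) m"
  then obtain \<X> where X: "finite \<X>" "\<X> \<noteq> {}" "card \<X> \<le> m" "\<X> \<subseteq> tau G K" "X \<subseteq> \<Union>\<X>"
    unfolding fin_cover_def by blast
  have Xc: "X \<subseteq> carrier G" using X(4,5) unfolding tau_def by blast
  have "(\<Inter>g\<in>{\<one>}. g <# X) \<in> (tau G ^^ m) (fin_cover K (m * (m + 1)^2))"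
    using translates_in_fin_cover[OF X]
    by (intro translates_in_tau_power[OF tf Xc fin_cover_lower, where t = "m + 1"]) auto
  then show "X \<in> (tau G ^^ m) (fin_cover K (m * (m + 1)^2))"
    using lcos_mult_one[OF Xc] by simp
qed

lemma fin_cover_funpow_tau:
  assumes tf: "torsion_free G" and K: "ideal_family K"
  shows "\<exists>f. fin_cover ((tau G ^^ n) K) m \<subseteq> (tau G ^^ f) K"
proof (induction n arbitrary: m)
  case 0
  show ?case using fin_cover_ideal[OF K] by (intro exI[of _ 0]) simp
next
  case (Suc n)
  obtain f where f: "fin_cover ((tau G ^^ n) K) (m * (m + 1)^2) \<subseteq> (tau G ^^ f) K"
    using Suc.IH by blast
  have "fin_cover ((tau G ^^ Suc n) K) m \<subseteq> (tau G ^^ m) (fin_cover ((tau G ^^ n) K) (m * (m + 1)^2))"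
    using fin_cover_tau[OF tf] by simp
  also have "\<dots> \<subseteq> (tau G ^^ m) ((tau G ^^ f) K)" by (rule funpow_tau_mono[OF f])
  also have "\<dots> = (tau G ^^ (m + f)) K" by (simp add: funpow_add)
  finally show ?case by blast
qed

lemma additive_Union_funpow_tau:
  assumes tf: "torsion_free G" and K: "invariant_lower G K" "ideal_family K"
  shows "additive_family (\<Union>n. (tau G ^^ n) K)"
  using funpow_tau_increasing[OF K(1)] fin_cover_funpow_tau[OF tf K(2)]
  by (intro additive_chain_Union) auto

end

section \<open>The thin-completion\<close>

lemma (in group) tau_star_properties:
  assumes F: "F \<subseteq> Pow (carrier G)"
  shows "invariant_lower G (tau_star G F)" "F \<subseteq> tau_star G F"
    and "tau G (tau_star G F) \<subseteq> tau_star G F"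
    and "\<And>H. F \<subseteq> H \<Longrightarrow> invariant_lower G H \<Longrightarrow> thin_complete G H \<Longrightarrow> tau_star G F \<subseteq> H"
proof -
  define \<C> where "\<C> = {H. F \<subseteq> H \<and> invariant_lower G H \<and> thin_complete G H}"
  have Z: "tau_star G F = \<Inter>\<C>"
    unfolding tau_star_def \<C>_def invariant_lower_def by (rule arg_cong[where f = Inter]) blast
  have \<C>: "invariant_lower G H" if "H \<in> \<C>" for H
    using that unfolding \<C>_def by blast
  have "invariant_lower G (Pow (carrier G))"
    unfolding invariant_lower_def lower_family_def left_invariant_def
    using l_coset_subset_G by blast
  moreover have "tau G (Pow (carrier G)) \<subseteq> Pow (carrier G)" unfolding tau_def by blast
  ultimately have "Pow (carrier G) \<in> \<C>"
    unfolding \<C>_def thin_complete_def using F invariant_lower_subset_tau by blast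
  then show "invariant_lower G (tau_star G F)"
    unfolding Z using \<C> by (intro invariant_lower_Inter) blast+
  show "F \<subseteq> tau_star G F" unfolding Z \<C>_def by blast
  have "tau G (\<Inter>\<C>) \<subseteq> H" if "H \<in> \<C>" for H
  proof -
    have "tau G (\<Inter>\<C>) \<subseteq> tau G H" using that by (intro tau_mono) blast
    also have "\<dots> = H" using that unfolding \<C>_def thin_complete_def by blast
    finally show ?thesis .
  qed
  then show "tau G (tau_star G F) \<subseteq> tau_star G F" unfolding Z by blast
  show "tau_star G F \<subseteq> H" if "F \<subseteq> H" "invariant_lower G H" "thin_complete G H" for H
    unfolding Z \<C>_def using that by blast
qed

lemma maximal_additive_between:
  assumes "F \<subseteq> Z" "invariant_lower G F" "additive_family F"
  obtains M where "F \<subseteq> M" "M \<subseteq> Z" "invariant_lower G M" "additive_family M"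
    and "\<And>K. M \<subseteq> K \<Longrightarrow> K \<subseteq> Z \<Longrightarrow> invariant_lower G K \<Longrightarrow> additive_family K \<Longrightarrow> K = M"
proof -
  define \<K> where "\<K> = {K. F \<subseteq> K \<and> K \<subseteq> Z \<and> invariant_lower G K \<and> additive_family K}"
  have "\<exists>U\<in>\<K>. \<forall>K\<in>C. K \<subseteq> U" if C: "C \<in> chains \<K>" for C
  proof (cases "C = {}")
    case True
    then show ?thesis using assms unfolding \<K>_def by blast
  next
    case False
    have sub: "C \<subseteq> \<K>" and chain: "\<forall>A\<in>C. \<forall>B\<in>C. A \<subseteq> B \<or> B \<subseteq> A"
      using C unfolding chains_def chain_subset_def by auto
    have "additive_family (\<Union>C)"
      unfolding additive_family_def
    proof (intro ballI)
      fix A B assume "A \<in> \<Union>C" "B \<in> \<Union>C"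
      then obtain KA KB where "KA \<in> C" "KB \<in> C" "A \<in> KA" "B \<in> KB" by blast
      moreover have "additive_family KA" "additive_family KB"
        using \<open>KA \<in> C\<close> \<open>KB \<in> C\<close> sub unfolding \<K>_def by blast+
      ultimately show "A \<union> B \<in> \<Union>C"
        using chain unfolding additive_family_def by blast
    qed
    moreover have "invariant_lower G (\<Union>C)"
      using sub unfolding \<K>_def by (intro invariant_lower_Union) blast
    ultimately have "\<Union>C \<in> \<K>" using False sub unfolding \<K>_def by blast
    then show ?thesis by blast
  qed
  then obtain M where M: "M \<in> \<K>" and maximal: "\<forall>K\<in>\<K>. M \<subseteq> K \<longrightarrow> K = M"
    using Zorn_Lemma2[of \<K>] by blast
  show ?thesis
  proof (rule that)
    show "F \<subseteq> M" "M \<subseteq> Z" "invariant_lower G M" "additive_family M"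
      using M unfolding \<K>_def by blast+
    show "K = M" if "M \<subseteq> K" "K \<subseteq> Z" "invariant_lower G K" "additive_family K" for K
    proof -
      have "F \<subseteq> K" using M \<open>M \<subseteq> K\<close> unfolding \<K>_def by blast
      then have "K \<in> \<K>" using that unfolding \<K>_def by blast
      then show ?thesis using maximal \<open>M \<subseteq> K\<close> by blast
    qed
  qed
qed

text \<open>The thin-completion of a left-invariant ideal is additive: a maximal additive
  left-invariant lower family M between F and tau*(F) contains the union of its
  tau-iterates, hence is thin-complete, hence equals tau*(F).\<close>
lemma (in group) tau_star_additive:
  assumes tf: "torsion_free G" and F: "invariant_lower G F" "ideal_family F"
  shows "additive_family (tau_star G F)"
proof -
  let ?Z = "tau_star G F"
  have "F \<subseteq> Pow (carrier G)" using F(1) unfolding invariant_lower_def by blast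
  note Z = tau_star_properties[OF this]
  obtain M where M: "F \<subseteq> M" "M \<subseteq> ?Z" "invariant_lower G M" "additive_family M"
    and maximal: "\<And>K. M \<subseteq> K \<Longrightarrow> K \<subseteq> ?Z \<Longrightarrow> invariant_lower G K \<Longrightarrow> additive_family K \<Longrightarrow> K = M"
    using maximal_additive_between[OF Z(2) F(1)] F(2) unfolding ideal_family_def by blast
  have ideal_M: "ideal_family M"
    using M(3,4) unfolding ideal_family_def invariant_lower_def by blast
  define M' where "M' = (\<Union>n. (tau G ^^ n) M)"
  have iterates_in_Z: "(tau G ^^ n) M \<subseteq> ?Z" for n
  proof (induction n)
    case (Suc n)
    then have "tau G ((tau G ^^ n) M) \<subseteq> tau G ?Z" by (rule tau_mono)
    then show ?case using Z(3) by simp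
  qed (simp add: M(2))
  have "M' = M"
  proof (rule maximal)
    show "M \<subseteq> M'" unfolding M'_def using UN_upper[of 0 UNIV "\<lambda>n. (tau G ^^ n) M"] by simp
    show "M' \<subseteq> ?Z" unfolding M'_def using iterates_in_Z by blast
    show "invariant_lower G M'"
      unfolding M'_def using invariant_lower_funpow[OF M(3)] by (intro invariant_lower_Union) blast
    show "additive_family M'"
      unfolding M'_def by (rule additive_Union_funpow_tau[OF tf M(3) ideal_M])
  qed
  moreover have "tau G M \<subseteq> M'" unfolding M'_def using UN_upper[of 1 UNIV "\<lambda>n. (tau G ^^ n) M"] by simp
  ultimately have "tau G M \<subseteq> M" by simp
  then have "thin_complete G M"
    using invariant_lower_subset_tau[OF M(3)] unfolding thin_complete_def by blast
  then have "?Z = M" using Z(4)[OF M(1,3)] M(2) by blast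
  then show ?thesis using M(4) by simp
qed

section \<open>The transfinite hierarchy\<close>

lemma hierarchy_eq:
  "tau_hierarchy G F T \<Longrightarrow> T a = (if \<forall>b. a \<le> b then F else tau G (tau_below T a))"
  unfolding tau_hierarchy_def tau_below_def by blast

lemma hierarchy_step: "tau_hierarchy G F T \<Longrightarrow> c < a \<Longrightarrow> T a = tau G (tau_below T a)"
proof -
  assume H: "tau_hierarchy G F T" and "c < a"
  then have "\<not> (\<forall>b. a \<le> b)" by (auto simp: not_le)
  then show "T a = tau G (tau_below T a)" using hierarchy_eq[OF H, of a] by (simp only: if_not_P if_False)
qed

lemma invariant_lower_tau_below:
  "(\<And>b. b < a \<Longrightarrow> invariant_lower G (T b)) \<Longrightarrow> invariant_lower G (tau_below T a)"
  unfolding tau_below_def by (intro invariant_lower_Union) blast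

lemma (in group) hierarchy_invariant_lower:
  fixes T :: "'o::wellorder \<Rightarrow> 'a set set"
  assumes H: "tau_hierarchy G F T" and F: "invariant_lower G F"
  shows "invariant_lower G (T a)"
proof (induction a rule: less_induct)
  case (less a)
  then show ?case
    using hierarchy_eq[OF H, of a] F invariant_lower_tau[OF invariant_lower_tau_below] by auto
qed

text \<open>The levels increase: T e \<subseteq> tau_below T a \<subseteq> tau (tau_below T a) = T a for e < a.\<close>
lemma (in group) hierarchy_mono:
  fixes T :: "'o::wellorder \<Rightarrow> 'a set set"
  assumes H: "tau_hierarchy G F T" and F: "invariant_lower G F" and "e \<le> a"
  shows "T e \<subseteq> T a"
proof (cases "e = a")
  case False
  then have "e < a" using \<open>e \<le> a\<close> by simp
  then have "T e \<subseteq> tau_below T a" unfolding tau_below_def by blast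
  also have "\<dots> \<subseteq> tau G (tau_below T a)"
    by (intro invariant_lower_subset_tau invariant_lower_tau_below hierarchy_invariant_lower[OF H F])
  also have "\<dots> = T a" using hierarchy_step[OF H \<open>e < a\<close>] by simp
  finally show ?thesis .
qed simp

lemma hierarchy_funpow_tau:
  fixes T :: "'o::wellorder \<Rightarrow> 'a set set"
  assumes H: "tau_hierarchy G F T" and lim: "limit_elem al" and "c < al"
  shows "\<exists>c'<al. (tau G ^^ m) (T c) \<subseteq> T c'"
proof (induction m)
  case 0 then show ?case using \<open>c < al\<close> by auto
next
  case (Suc m)
  then obtain c' where c': "c' < al" "(tau G ^^ m) (T c) \<subseteq> T c'" by blast
  obtain c'' where c'': "c' < c''" "c'' < al" using lim c'(1) unfolding limit_elem_def by blast
  have "(tau G ^^ Suc m) (T c) \<subseteq> tau G (tau_below T c'')"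
    using c' c''(1) unfolding tau_below_def by (auto intro!: tau_mono)
  also have "\<dots> = T c''" using hierarchy_step[OF H c''(1)] by simp
  finally show ?case using c''(2) by blast
qed

definition covers_absorbed :: "('o::wellorder \<Rightarrow> 'a set set) \<Rightarrow> 'o \<Rightarrow> bool" where
  "covers_absorbed T b \<longleftrightarrow> (\<forall>al m. limit_elem al \<and> b < al \<longrightarrow> (\<exists>c<al. fin_cover (T b) m \<subseteq> T c))"

lemma (in group) additive_tau_below:
  fixes T :: "'o::wellorder \<Rightarrow> 'a set set"
  assumes H: "tau_hierarchy G F T" and F: "invariant_lower G F" and lim: "limit_elem al"
    and absorbed: "\<And>b. b < al \<Longrightarrow> covers_absorbed T b"
  shows "additive_family (tau_below T al)"
  unfolding tau_below_def
proof (rule additive_chain_Union)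
  fix b assume "b \<in> {..<al}"
  then have "\<exists>c<al. fin_cover (T b) 2 \<subseteq> T c"
    using absorbed lim unfolding covers_absorbed_def by blast
  then show "\<exists>c\<in>{..<al}. fin_cover (T b) 2 \<subseteq> T c" by auto
qed (rule hierarchy_mono[OF H F])

text \<open>Finite covers by members of the union of the levels below a non-minimal level b
  reappear below every limit above b: if b has a largest predecessor d, this union is
  T d; otherwise b is a limit, the union is an ideal and lies in T b.\<close>
lemma (in group) fin_cover_tau_below:
  fixes T :: "'o::wellorder \<Rightarrow> 'a set set"
  assumes H: "tau_hierarchy G F T" and F: "invariant_lower G F"
    and "c < b" and absorbed: "\<And>x. x < b \<Longrightarrow> covers_absorbed T x"
    and lim: "limit_elem al" "b < al"
  shows "\<exists>c0<al. fin_cover (tau_below T b) N \<subseteq> T c0"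
proof (cases "\<exists>d<b. \<forall>x<b. x \<le> d")
  case True
  then obtain d where d: "d < b" "\<forall>x<b. x \<le> d" by blast
  have "tau_below T b = T d"
    using d hierarchy_mono[OF H F] unfolding tau_below_def by blast
  moreover have "d < al" using d(1) lim(2) by (rule order.strict_trans)
  ultimately show ?thesis
    using absorbed[OF d(1)] lim(1) unfolding covers_absorbed_def by auto
next
  case False
  then have "limit_elem b" unfolding limit_elem_def by (metis not_le)
  then have "additive_family (tau_below T b)"
    using additive_tau_below[OF H F] absorbed by blast
  moreover have inv: "invariant_lower G (tau_below T b)"
    by (intro invariant_lower_tau_below hierarchy_invariant_lower[OF H F])
  ultimately have "fin_cover (tau_below T b) N \<subseteq> tau_below T b"
    by (intro fin_cover_ideal) (simp add: ideal_family_def invariant_lower_def)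
  also have "\<dots> \<subseteq> T b"
    using invariant_lower_subset_tau[OF inv] hierarchy_step[OF H \<open>c < b\<close>] by simp
  finally show ?thesis using lim(2) by blast
qed

text \<open>Every level absorbs finite covers, by well-founded induction on the levels: an
  m-fold cover of T b = tau(tau_below T b) lies in tau^m of a cover by members of
  tau_below T b, which reappears at some level below the limit.\<close>
lemma (in group) hierarchy_covers_absorbed:
  fixes T :: "'o::wellorder \<Rightarrow> 'a set set"
  assumes tf: "torsion_free G" and H: "tau_hierarchy G F T"
    and F: "invariant_lower G F" "ideal_family F"
  shows "covers_absorbed T b"
proof (induction b rule: less_induct)
  case (less b)
  show ?case unfolding covers_absorbed_def
  proof (intro allI impI)
    fix al m assume lim: "limit_elem al \<and> b < al"
    show "\<exists>c<al. fin_cover (T b) m \<subseteq> T c"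
    proof (cases "\<forall>x. b \<le> x")
      case True
      then show ?thesis using hierarchy_eq[OF H, of b] fin_cover_ideal[OF F(2)] lim by auto
    next
      case False
      then obtain c where "c < b" by (auto simp: not_le)
      obtain c0 where c0: "c0 < al" "fin_cover (tau_below T b) (m * (m + 1)^2) \<subseteq> T c0"
        using fin_cover_tau_below[OF H F(1) \<open>c < b\<close> less.IH] lim by blast
      have "fin_cover (T b) m \<subseteq> (tau G ^^ m) (fin_cover (tau_below T b) (m * (m + 1)^2))"
        using fin_cover_tau[OF tf] hierarchy_step[OF H \<open>c < b\<close>] by simp
      also have "\<dots> \<subseteq> (tau G ^^ m) (T c0)" by (rule funpow_tau_mono[OF c0(2)])
      finally show ?thesis using hierarchy_funpow_tau[OF H _ c0(1), of m] lim by blast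
    qed
  qed
qed

theorem theorem1p2:
  fixes G :: "('a, 'b) monoid_scheme" and \<F> :: "'a set set"
  assumes "group G"
    and "torsion_free G"
    and "\<F> \<subseteq> Pow (carrier G)"
    and "left_invariant G \<F>"
    and "ideal_family \<F>"
  shows "(\<forall>(T :: 'o::wellorder \<Rightarrow> 'a set set) \<alpha>.
            tau_hierarchy G \<F> T \<and> limit_elem \<alpha> \<longrightarrow> additive_family (tau_below T \<alpha>))
         \<and> ideal_family (tau_star G \<F>) \<and> left_invariant G (tau_star G \<F>)"
proof -
  interpret group G by fact
  have F: "invariant_lower G \<F>"
    using assms(3-5) unfolding invariant_lower_def ideal_family_def by blast
  have "additive_family (tau_below T \<alpha>)"
    if "tau_hierarchy G \<F> T" "limit_elem \<alpha>" for T :: "'o::wellorder \<Rightarrow> 'a set set" and \<alpha>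
    using additive_tau_below[OF that(1) F that(2)]
      hierarchy_covers_absorbed[OF assms(2) that(1) F assms(5)] by blast
  moreover have "invariant_lower G (tau_star G \<F>)"
    using tau_star_properties(1)[OF assms(3)] .
  moreover have "additive_family (tau_star G \<F>)"
    by (rule tau_star_additive[OF assms(2) F assms(5)])
  ultimately show ?thesis unfolding ideal_family_def invariant_lower_def by blast
qed

end
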